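(* Fix $\delta \ge 0$ and a risk prediction function $\hat{p}:\mathcal{X}\to[0,1]$. Let $(X_i,Y_i)$, $i=1,\dots,n$, be i.i.d. copies of $(X,Y)$ with $Y\in\{0,1\}$ and $\Pr(Y=1\mid X)=p_0(X)$, and suppose the one-sided null hypothesis $H_{0,>}:\Pr(X\in A_{\delta,>})=0$ holds, where $A_{\delta,>}=\{x: p_0(x)-\hat{p}(x)>\delta\}$. Split the data into a training partition (observations $1,\dots,n_1$) and a test partition (observations $n_1+1,\dots,n$, with $n_2=n-n_1$). Using only the training partition, fit a finite collection of bounded residual models $\hat g_{\lambda,n}:\mathcal{X}\to\mathbb{R}$, $\lambda\in\Lambda$, and form the detector class $$\widehat{\mathcal{H}}_{+,\Lambda}=\big\{x\mapsto \hat g_{\lambda,n}(x)\mathbb{1}\{\hat g_{\lambda,n}(x)>\gamma\} : \gamma\ge 0,\ \lambda\in\Lambda\big\}.$$ Define the test statistic $$\hat T^{(split)}_{n,>}=\sup_{h\in\widehat{\mathcal{H}}_{+,\Lambda}}\frac{1}{n_2}\sum_{i=n_1+1}^n (Y_i-\hat p_\delta(X_i))h(X_i).$$ Conditionally on the training partition and on $X_{n_1+1},\dots,X_n$, let $Y_i^*$, $i=n_1+1,\dots,n$, be independent Bernoulli random variables with $\Pr(Y_i^*=1)=\hat p_\delta(X_i)$, let $$T^{*(split)}_{>}=\sup_{h\in\widehat{\mathcal{H}}_{+,\Lambda}}\frac{1}{n_2}\sum_{i=n_1+1}^n (Y^*_i-\hat p_\delta(X_i))h(X_i),$$ and let $\tau_\alpha$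 be the $1-\alpha$ quantile of the conditional distribution of $T^{*(split)}_{>}$. Then the test that rejects when $\hat T^{(split)}_{n,>}>\tau_\alpha$ has Type I error at most $\alpha$ (for every finite $n$), i.e. $\Pr(\hat T^{(split)}_{n,>}>\tau_\alpha)\le\alpha$.
   Context: $\hat{p}_\delta(x) = [\hat{p}(x)+\delta]_{[0,1]}$, where $[q]_{[0,1]}$ denotes clipping of $q$ to the interval $[0,1]$. The $1-\alpha$ quantile of a random variable $T$ is $\inf\{t:\Pr(T\le t)\ge 1-\alpha\}$. *)

theory Defs
  imports "HOL-Probability.Probability"
begin

definition pdelta :: "('x \<Rightarrow> real) \<Rightarrow> real \<Rightarrow> 'x \<Rightarrow> real" where
  "pdelta phat \<delta> x = max 0 (min 1 (phat x + \<delta>))"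

definition split_stat ::
  "'l set \<Rightarrow> ('l \<Rightarrow> 'x \<Rightarrow> real) \<Rightarrow> ('x \<Rightarrow> real) \<Rightarrow> nat \<Rightarrow> nat
     \<Rightarrow> (nat \<Rightarrow> 'x) \<Rightarrow> (nat \<Rightarrow> bool) \<Rightarrow> real" where
  "split_stat Lam G pd n1 n xs ys =
     Sup {(1 / real (n - n1)) *
            (\<Sum>i\<in>{n1<..n}. (of_bool (ys i) - pd (xs i)) *
                 (G l (xs i) * of_bool (G l (xs i) > \<gamma>))) | \<gamma> l. 0 \<le> \<gamma> \<and> l \<in> Lam}"

definition boot_dist ::
  "'l set \<Rightarrow> ('l \<Rightarrow> 'x \<Rightarrow> real) \<Rightarrow> ('x \<Rightarrow> real) \<Rightarrow> nat \<Rightarrow> nat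
     \<Rightarrow> (nat \<Rightarrow> 'x) \<Rightarrow> real pmf" where
  "boot_dist Lam G pd n1 n xs =
     map_pmf (split_stat Lam G pd n1 n xs)
       (Pi_pmf {n1<..n} False (\<lambda>i. bernoulli_pmf (pd (xs i))))"

definition quantile_pmf :: "real pmf \<Rightarrow> real \<Rightarrow> real" where
  "quantile_pmf P \<alpha> = Inf {t. measure_pmf.prob P {s. s \<le> t} \<ge> 1 - \<alpha>}"

end

theory Submission
  imports Defs
begin

text \<open>
  Under the null hypothesis, \<open>p0 \<le> pdelta phat \<delta>\<close> almost surely. Since \<open>\<gamma> \<ge> 0\<close>, every
  detector is nonnegative, so the split statistic is nondecreasing in the test labels.
  Conditionally on the training sample and on the test covariates, the test labels are
  independent Bernoulli(\<open>p0 (X i)\<close>) and are therefore stochastically dominated by the bootstrap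
  labels, which are Bernoulli(\<open>pdelta phat \<delta> (X i)\<close>). Hence the conditional rejection
  probability is at most the probability that the bootstrap statistic exceeds its own
  \<open>1 - \<alpha>\<close> quantile, which is at most \<open>\<alpha>\<close>; integrating over the conditioning gives the claim.
\<close>

section \<open>Quantiles of finitely supported distributions\<close>

lemma obtain_support_downset_prob_eq_atMost:
  fixes P :: "real pmf" and D :: "real set"
  assumes fin: "finite (set_pmf P)" and pos: "0 < measure_pmf.prob P D"
    and down: "\<And>x y. x \<le> y \<Longrightarrow> y \<in> D \<Longrightarrow> x \<in> D"
  obtains a where "a \<in> D" "a \<in> set_pmf P" "measure_pmf.prob P D = measure_pmf.prob P {t. t \<le> a}"
proof
  have ne: "D \<inter> set_pmf P \<noteq> {}"
    using pos measure_pmf_zero_iff[of P D] by auto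
  let ?a = "Max (D \<inter> set_pmf P)"
  show "?a \<in> D" "?a \<in> set_pmf P"
    using Max_in[of "D \<inter> set_pmf P"] fin ne by auto
  have "\<And>x. x \<in> D \<inter> set_pmf P \<Longrightarrow> x \<le> ?a"
    using fin by auto
  with \<open>?a \<in> D\<close> show "measure_pmf.prob P D = measure_pmf.prob P {t. t \<le> ?a}"
    by (intro measure_prob_cong_0) (use down in \<open>auto simp: set_pmf_iff\<close>)
qed

lemma
  fixes P :: "real pmf"
  assumes fin: "finite (set_pmf P)" and "0 \<le> \<alpha>" "\<alpha> < 1"
  shows quantile_pmf_cdf_ge: "1 - \<alpha> \<le> measure_pmf.prob P {s. s \<le> quantile_pmf P \<alpha>}"
    and quantile_pmf_le: "1 - \<alpha> \<le> measure_pmf.prob P {s. s \<le> t} \<Longrightarrow> quantile_pmf P \<alpha> \<le> t"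
proof -
  define T where "T = {t. 1 - \<alpha> \<le> measure_pmf.prob P {s. s \<le> t}}"
  have below: "\<exists>a\<in>T \<inter> set_pmf P. a \<le> t" if "t \<in> T" for t
  proof -
    have "0 < measure_pmf.prob P {s. s \<le> t}"
      using that assms by (simp add: T_def)
    then obtain a where "a \<le> t" "a \<in> set_pmf P"
      "measure_pmf.prob P {s. s \<le> t} = measure_pmf.prob P {s. s \<le> a}"
      by (rule obtain_support_downset_prob_eq_atMost[OF fin]) auto
    with that show ?thesis by (auto simp: T_def)
  qed
  have "measure_pmf.prob P {s. s \<le> Max (set_pmf P)} = 1"
    by (rule measure_pmf.prob_eq_1[THEN iffD2]) (auto simp: AE_measure_pmf_iff fin)
  then have "Max (set_pmf P) \<in> T"
    using assms by (simp add: T_def)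
  then have ne: "T \<inter> set_pmf P \<noteq> {}"
    using Max_in[of "set_pmf P"] fin set_pmf_not_empty by blast
  let ?m = "Min (T \<inter> set_pmf P)"
  have m_in: "?m \<in> T"
    using Min_in[of "T \<inter> set_pmf P"] fin ne by blast
  have m_le: "?m \<le> t" if t: "t \<in> T" for t
  proof -
    obtain a where "a \<in> T \<inter> set_pmf P" "a \<le> t" using below[OF t] by blast
    moreover have "?m \<le> a" using \<open>a \<in> T \<inter> set_pmf P\<close> fin by (intro Min_le) auto
    ultimately show ?thesis by simp
  qed
  have "quantile_pmf P \<alpha> = ?m"
    unfolding quantile_pmf_def T_def[symmetric] using m_in m_le by (intro cInf_eq_minimum)
  with m_in m_le show "1 - \<alpha> \<le> measure_pmf.prob P {s. s \<le> quantile_pmf P \<alpha>}"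
    and "1 - \<alpha> \<le> measure_pmf.prob P {s. s \<le> t} \<Longrightarrow> quantile_pmf P \<alpha> \<le> t"
    by (auto simp: T_def)
qed

lemma prob_greater_quantile_pmf_le:
  fixes P :: "real pmf"
  assumes "finite (set_pmf P)" "0 \<le> \<alpha>" "\<alpha> < 1"
  shows "measure_pmf.prob P {s. quantile_pmf P \<alpha> < s} \<le> \<alpha>"
proof -
  have "{s. quantile_pmf P \<alpha> < s} = UNIV - {s. s \<le> quantile_pmf P \<alpha>}" by auto
  then show ?thesis
    using measure_pmf.prob_compl[of "{s. s \<le> quantile_pmf P \<alpha>}" P] quantile_pmf_cdf_ge[OF assms]
    by simp
qed

lemma quantile_pmf_less_iff:
  fixes P :: "real pmf"
  assumes fin: "finite (set_pmf P)" and "0 \<le> \<alpha>" "\<alpha> < 1"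
  shows "quantile_pmf P \<alpha> < s \<longleftrightarrow> 1 - \<alpha> \<le> measure_pmf.prob P {t. t < s}"
proof
  assume "quantile_pmf P \<alpha> < s"
  then have "measure_pmf.prob P {t. t \<le> quantile_pmf P \<alpha>} \<le> measure_pmf.prob P {t. t < s}"
    by (intro measure_pmf.finite_measure_mono) auto
  with quantile_pmf_cdf_ge[OF assms] show "1 - \<alpha> \<le> measure_pmf.prob P {t. t < s}"
    by linarith
next
  assume le: "1 - \<alpha> \<le> measure_pmf.prob P {t. t < s}"
  then have "0 < measure_pmf.prob P {t. t < s}"
    using assms by simp
  then obtain a where "a < s" "measure_pmf.prob P {t. t < s} = measure_pmf.prob P {t. t \<le> a}"
    by (rule obtain_support_downset_prob_eq_atMost[OF fin]) auto
  with le have "quantile_pmf P \<alpha> \<le> a"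
    by (intro quantile_pmf_le[OF assms]) simp
  also have "a < s" by fact
  finally show "quantile_pmf P \<alpha> < s" .
qed

section \<open>Products of Bernoulli distributions\<close>

lemma nn_integral_bernoulli_pmf_mono:
  fixes f :: "bool \<Rightarrow> ennreal"
  assumes "f False \<le> f True" "0 \<le> a" "a \<le> c" "c \<le> 1"
  shows "(\<integral>\<^sup>+b. f b \<partial>bernoulli_pmf a) \<le> (\<integral>\<^sup>+b. f b \<partial>bernoulli_pmf c)"
proof -
  have split_a: "ennreal (1 - a) = ennreal (c - a) + ennreal (1 - c)"
    and split_c: "ennreal c = ennreal a + ennreal (c - a)"
    using assms by (simp_all flip: ennreal_plus)
  have "f True * ennreal a + f False * ennreal (1 - a)
      = f True * ennreal a + f False * ennreal (c - a) + f False * ennreal (1 - c)"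
    by (simp add: split_a distrib_left add.assoc)
  also have "\<dots> \<le> f True * ennreal a + f True * ennreal (c - a) + f False * ennreal (1 - c)"
    using assms by (intro add_mono mult_right_mono order_refl) auto
  also have "\<dots> = f True * ennreal c + f False * ennreal (1 - c)"
    by (simp add: split_c distrib_left)
  finally show ?thesis
    using assms by simp
qed

lemma nn_integral_Pi_pmf_bernoulli_mono:
  fixes f :: "('i \<Rightarrow> bool) \<Rightarrow> ennreal"
  assumes "finite N" "\<And>j. j \<in> N \<Longrightarrow> 0 \<le> a j \<and> a j \<le> c j \<and> c j \<le> 1" and "mono f"
  shows "(\<integral>\<^sup>+h. f h \<partial>Pi_pmf N False (\<lambda>j. bernoulli_pmf (a j)))
           \<le> (\<integral>\<^sup>+h. f h \<partial>Pi_pmf N False (\<lambda>j. bernoulli_pmf (c j)))"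
  using assms
proof (induction N arbitrary: f rule: finite_induct)
  case empty
  then show ?case by simp
next
  case (insert i N)
  define F where "F q y = (\<integral>\<^sup>+h. f (h(i := y)) \<partial>Pi_pmf N False (\<lambda>j. bernoulli_pmf (q j)))" for q y
  have upd_mono: "mono (\<lambda>h. f (h(i := y)))" for y
    using \<open>mono f\<close> by (auto simp: mono_def le_fun_def)
  have IH: "F a y \<le> F c y" for y
    unfolding F_def using insert.prems(1) by (intro insert.IH[OF _ upd_mono]) auto
  have F_mono: "F c False \<le> F c True"
    unfolding F_def using \<open>mono f\<close>
    by (intro nn_integral_mono) (auto simp: mono_def le_fun_def)
  have insert_eq: "(\<integral>\<^sup>+h. f h \<partial>Pi_pmf (insert i N) False (\<lambda>j. bernoulli_pmf (q j)))
      = (\<integral>\<^sup>+y. F q y \<partial>bernoulli_pmf (q i))" for q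
    by (simp add: Pi_pmf_insert[OF insert.hyps] nn_integral_pair_pmf' F_def)
  have "(\<integral>\<^sup>+y. F a y \<partial>bernoulli_pmf (a i)) \<le> (\<integral>\<^sup>+y. F c y \<partial>bernoulli_pmf (a i))"
    by (intro nn_integral_mono IH)
  also have "\<dots> \<le> (\<integral>\<^sup>+y. F c y \<partial>bernoulli_pmf (c i))"
    using insert.prems(1) F_mono by (intro nn_integral_bernoulli_pmf_mono) auto
  finally show ?case
    unfolding insert_eq .
qed

lemma set_Pi_pmf_subset_PiE_dflt:
  "finite A \<Longrightarrow> set_pmf (Pi_pmf A d p) \<subseteq> PiE_dflt A d (\<lambda>_. UNIV)"
  using set_Pi_pmf_subset[of A d p] by (auto simp: PiE_dflt_def)

lemma finite_set_Pi_pmf: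
  fixes p :: "'i \<Rightarrow> 'b::finite pmf"
  shows "finite A \<Longrightarrow> finite (set_pmf (Pi_pmf A d p))"
  using set_Pi_pmf_subset_PiE_dflt by (rule finite_subset) auto

lemma nn_integral_Pi_pmf_eq_sum:
  fixes p :: "'i \<Rightarrow> 'b::finite pmf"
  assumes "finite A"
  shows "(\<integral>\<^sup>+y. f y \<partial>Pi_pmf A d p)
           = (\<Sum>y\<in>PiE_dflt A d (\<lambda>_. UNIV). f y * ennreal (\<Prod>j\<in>A. pmf (p j) (y j)))"
proof -
  have "(\<integral>\<^sup>+y. f y \<partial>Pi_pmf A d p)
      = (\<Sum>y\<in>PiE_dflt A d (\<lambda>_. UNIV). f y * ennreal (pmf (Pi_pmf A d p) y))"
    using assms set_Pi_pmf_subset_PiE_dflt[OF assms, of d p]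
    by (intro nn_integral_measure_pmf_support) auto
  also have "\<dots> = (\<Sum>y\<in>PiE_dflt A d (\<lambda>_. UNIV). f y * ennreal (\<Prod>j\<in>A. pmf (p j) (y j)))"
    using assms by (intro sum.cong refl, subst pmf_Pi') (auto simp: PiE_dflt_def)
  finally show ?thesis .
qed

lemma borel_measurable_nn_integral_Pi_bernoulli:
  fixes q :: "'k \<Rightarrow> 'i \<Rightarrow> real" and F :: "'k \<Rightarrow> ('i \<Rightarrow> bool) \<Rightarrow> ennreal"
  assumes "finite N"
    and q: "\<And>j. j \<in> N \<Longrightarrow> (\<lambda>k. q k j) \<in> borel_measurable K"
      "\<And>k j. j \<in> N \<Longrightarrow> 0 \<le> q k j \<and> q k j \<le> 1"
    and F: "\<And>y. (\<lambda>k. F k y) \<in> borel_measurable K"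
  shows "(\<lambda>k. \<integral>\<^sup>+y. F k y \<partial>Pi_pmf N False (\<lambda>j. bernoulli_pmf (q k j))) \<in> borel_measurable K"
proof -
  have "(\<integral>\<^sup>+y. F k y \<partial>Pi_pmf N False (\<lambda>j. bernoulli_pmf (q k j)))
      = (\<Sum>y\<in>PiE_dflt N False (\<lambda>_. UNIV).
           F k y * ennreal (\<Prod>j\<in>N. if y j then q k j else 1 - q k j))" for k
    unfolding nn_integral_Pi_pmf_eq_sum[OF \<open>finite N\<close>] using q(2)
    by (intro sum.cong refl arg_cong2[where f = "(*)"] arg_cong[where f = ennreal] prod.cong) auto
  moreover have "(\<lambda>k. \<Prod>j\<in>N. if y j then q k j else 1 - q k j) \<in> borel_measurable K" for y
    using q(1) by (intro borel_measurable_prod) auto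
  ultimately show ?thesis
    using F by simp
qed

lemma nn_integral_measure_pmf_swap:
  fixes f :: "'a \<Rightarrow> 'b \<Rightarrow> ennreal"
  assumes "finite (set_pmf P)" "\<And>y. (\<lambda>x. f x y) \<in> borel_measurable M"
  shows "(\<integral>\<^sup>+y. \<integral>\<^sup>+x. f x y \<partial>M \<partial>P) = (\<integral>\<^sup>+x. \<integral>\<^sup>+y. f x y \<partial>P \<partial>M)"
proof -
  have "(\<integral>\<^sup>+y. \<integral>\<^sup>+x. f x y \<partial>M \<partial>P) = (\<Sum>y\<in>set_pmf P. (\<integral>\<^sup>+x. f x y \<partial>M) * pmf P y)"
    using assms by (intro nn_integral_measure_pmf_finite) auto
  also have "\<dots> = (\<integral>\<^sup>+x. (\<Sum>y\<in>set_pmf P. f x y * pmf P y) \<partial>M)"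
    using assms by (simp add: nn_integral_multc nn_integral_sum)
  also have "\<dots> = (\<integral>\<^sup>+x. \<integral>\<^sup>+y. f x y \<partial>P \<partial>M)"
    using assms by (simp add: nn_integral_measure_pmf_finite)
  finally show ?thesis .
qed

section \<open>The split statistic and its bootstrap\<close>

definition detector_mean ::
  "('l \<Rightarrow> 'x \<Rightarrow> real) \<Rightarrow> ('x \<Rightarrow> real) \<Rightarrow> nat \<Rightarrow> nat \<Rightarrow> (nat \<Rightarrow> 'x) \<Rightarrow> (nat \<Rightarrow> bool)
     \<Rightarrow> real \<Rightarrow> 'l \<Rightarrow> real" where
  "detector_mean G pd n1 n xs ys \<gamma> l =
     (1 / real (n - n1)) *
       (\<Sum>i\<in>{n1<..n}. (of_bool (ys i) - pd (xs i)) * (G l (xs i) * of_bool (G l (xs i) > \<gamma>)))"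

lemma split_stat_eq_SUP:
  "split_stat Lam G pd n1 n xs ys = (SUP (\<gamma>, l)\<in>{0..} \<times> Lam. detector_mean G pd n1 n xs ys \<gamma> l)"
  unfolding split_stat_def detector_mean_def
  by (rule arg_cong[where f = Sup]) force

lemma split_stat_cong:
  assumes "\<And>i. i \<in> {n1<..n} \<Longrightarrow> xs i = xs' i" "\<And>i. i \<in> {n1<..n} \<Longrightarrow> ys i = ys' i"
  shows "split_stat Lam G pd n1 n xs ys = split_stat Lam G pd n1 n xs' ys'"
proof -
  have eq: "detector_mean G pd n1 n xs ys \<gamma> l = detector_mean G pd n1 n xs' ys' \<gamma> l" for \<gamma> l
    unfolding detector_mean_def using assms
    by (intro arg_cong2[where f = "(*)"] sum.cong) auto
  show ?thesis
    unfolding split_stat_eq_SUP eq ..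
qed

lemma bdd_above_detector_mean:
  assumes "finite Lam"
  shows "bdd_above ((\<lambda>(\<gamma>, l). detector_mean G pd n1 n xs ys \<gamma> l) ` (\<Gamma> \<times> Lam))"
proof (rule bdd_aboveI2)
  let ?a = "\<lambda>i. of_bool (ys i) - pd (xs i)"
  fix \<gamma>l assume "\<gamma>l \<in> \<Gamma> \<times> Lam"
  then obtain \<gamma> l where \<gamma>l: "\<gamma>l = (\<gamma>, l)" "l \<in> Lam" by auto
  have "?a i * (G l (xs i) * of_bool (G l (xs i) > \<gamma>)) \<le> (\<Sum>l'\<in>Lam. \<bar>?a i\<bar> * \<bar>G l' (xs i)\<bar>)"
    for i
  proof -
    have "?a i * (G l (xs i) * of_bool (G l (xs i) > \<gamma>)) \<le> \<bar>?a i\<bar> * \<bar>G l (xs i)\<bar>"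
      by (auto simp: abs_mult intro: order_trans[OF abs_ge_self])
    also have "\<dots> \<le> (\<Sum>l'\<in>Lam. \<bar>?a i\<bar> * \<bar>G l' (xs i)\<bar>)"
      using assms \<gamma>l(2) by (intro member_le_sum) auto
    finally show ?thesis .
  qed
  then show "(case \<gamma>l of (\<gamma>, l) \<Rightarrow> detector_mean G pd n1 n xs ys \<gamma> l)
      \<le> (1 / real (n - n1)) * (\<Sum>i\<in>{n1<..n}. \<Sum>l'\<in>Lam. \<bar>?a i\<bar> * \<bar>G l' (xs i)\<bar>)"
    unfolding \<gamma>l(1) prod.case detector_mean_def by (intro mult_left_mono sum_mono) auto
qed

lemma detector_mean_mono:
  assumes "0 \<le> \<gamma>" "ys \<le> ys'"
  shows "detector_mean G pd n1 n xs ys \<gamma> l \<le> detector_mean G pd n1 n xs ys' \<gamma> l"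
  unfolding detector_mean_def
proof (intro mult_left_mono sum_mono mult_right_mono)
  fix i
  show "of_bool (ys i) - pd (xs i) \<le> of_bool (ys' i) - pd (xs i)"
    using \<open>ys \<le> ys'\<close> by (auto simp: le_fun_def)
qed (use \<open>0 \<le> \<gamma>\<close> in auto)

lemma split_stat_mono:
  assumes "finite Lam" "Lam \<noteq> {}"
  shows "mono (split_stat Lam G pd n1 n xs)"
proof (rule monoI)
  fix ys ys' :: "nat \<Rightarrow> bool" assume "ys \<le> ys'"
  then show "split_stat Lam G pd n1 n xs ys \<le> split_stat Lam G pd n1 n xs ys'"
    unfolding split_stat_eq_SUP using assms
    by (intro cSUP_mono bdd_above_detector_mean) (auto intro: detector_mean_mono)
qed

lemma exists_Rats_threshold:
  fixes F :: "real set"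
  assumes "finite F"
  obtains r where "r \<in> \<rat>" "\<gamma> \<le> r" "\<And>a. a \<in> F \<Longrightarrow> \<gamma> < a \<longleftrightarrow> r < a"
proof -
  let ?F = "insert (\<gamma> + 1) {a\<in>F. \<gamma> < a}"
  have "\<gamma> < Min ?F"
    using assms by (subst Min_gr_iff) auto
  then obtain r where r: "r \<in> \<rat>" "\<gamma> < r" "r < Min ?F"
    using Rats_dense_in_real by blast
  have "r < a" if "a \<in> F" "\<gamma> < a" for a
    using r(3) Min_le[of ?F a] assms that by auto
  with r that show ?thesis by force
qed

text \<open>Only finitely many thresholds matter, so the supremum may be taken over rational ones;
  this makes the statistic a countable supremum of measurable functions.\<close>
lemma split_stat_eq_SUP_Rats:
  "split_stat Lam G pd n1 n xs ys = (SUP (r, l)\<in>(\<rat> \<inter> {0..}) \<times> Lam. detector_mean G pd n1 n xs ys r l)"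
  unfolding split_stat_eq_SUP
proof (rule arg_cong[where f = Sup], intro equalityI subsetI)
  fix v assume "v \<in> (\<lambda>(\<gamma>, l). detector_mean G pd n1 n xs ys \<gamma> l) ` ({0..} \<times> Lam)"
  then obtain \<gamma> l where v: "v = detector_mean G pd n1 n xs ys \<gamma> l" "0 \<le> \<gamma>" "l \<in> Lam" by auto
  obtain r where r: "r \<in> \<rat>" "\<gamma> \<le> r"
    and same: "\<And>a. a \<in> (\<lambda>i. G l (xs i)) ` {n1<..n} \<Longrightarrow> \<gamma> < a \<longleftrightarrow> r < a"
    using exists_Rats_threshold[of "(\<lambda>i. G l (xs i)) ` {n1<..n}"] by blast
  have "v = detector_mean G pd n1 n xs ys r l"
    unfolding v(1) detector_mean_def using same
    by (intro arg_cong2[where f = "(*)"] sum.cong) auto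
  with v r show "v \<in> (\<lambda>(r, l). detector_mean G pd n1 n xs ys r l) ` ((\<rat> \<inter> {0..}) \<times> Lam)"
    by force
qed auto

lemma borel_measurable_split_stat:
  fixes G :: "'k \<Rightarrow> 'l \<Rightarrow> 'x \<Rightarrow> real" and xs :: "'k \<Rightarrow> nat \<Rightarrow> 'x" and ys :: "'k \<Rightarrow> nat \<Rightarrow> bool"
  assumes "finite Lam"
    and G: "\<And>l i. l \<in> Lam \<Longrightarrow> i \<in> {n1<..n} \<Longrightarrow> (\<lambda>k. G k l (xs k i)) \<in> borel_measurable K"
    and pd: "\<And>i. i \<in> {n1<..n} \<Longrightarrow> (\<lambda>k. pd (xs k i)) \<in> borel_measurable K"
    and ys: "\<And>i. i \<in> {n1<..n} \<Longrightarrow> (\<lambda>k. ys k i) \<in> measurable K (count_space UNIV)"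
  shows "(\<lambda>k. split_stat Lam (G k) pd n1 n (xs k) (ys k)) \<in> borel_measurable K"
  unfolding split_stat_eq_SUP_Rats
proof (rule borel_measurable_cSUP)
  show "countable ((\<rat> \<inter> {0..}) \<times> Lam)"
    using assms(1) by (intro countable_SIGMA countable_Int1 countable_rat countable_finite)
  fix rl :: "real \<times> 'l" assume "rl \<in> (\<rat> \<inter> {0..}) \<times> Lam"
  then obtain r l where rl: "rl = (r, l)" "l \<in> Lam" by auto
  have [measurable]: "(\<lambda>k. G k l (xs k i)) \<in> borel_measurable K"
    "(\<lambda>k. pd (xs k i)) \<in> borel_measurable K" "(\<lambda>k. ys k i) \<in> measurable K (count_space UNIV)"
    if "i \<in> {n1<..n}" for i
    using G[OF rl(2) that] pd[OF that] ys[OF that] by auto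
  show "(\<lambda>k. case rl of (r, l) \<Rightarrow> detector_mean (G k) pd n1 n (xs k) (ys k) r l) \<in> borel_measurable K"
    unfolding rl(1) prod.case detector_mean_def by measurable
qed (rule bdd_above_detector_mean[OF assms(1)])

lemma finite_set_boot_dist: "finite (set_pmf (boot_dist Lam G pd n1 n xs))"
  unfolding boot_dist_def by (simp add: finite_set_Pi_pmf)

lemma boot_dist_cong:
  assumes "\<And>i. i \<in> {n1<..n} \<Longrightarrow> xs i = xs' i"
  shows "boot_dist Lam G pd n1 n xs = boot_dist Lam G pd n1 n xs'"
proof -
  have "split_stat Lam G pd n1 n xs = split_stat Lam G pd n1 n xs'"
    using assms by (intro ext split_stat_cong) auto
  then show ?thesis
    unfolding boot_dist_def using assms by (metis Pi_pmf_cong)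
qed

lemma quantile_boot_dist_less_iff:
  assumes "0 \<le> \<alpha>" "\<alpha> < 1"
  shows "quantile_pmf (boot_dist Lam G pd n1 n xs) \<alpha> < s \<longleftrightarrow>
    1 - \<alpha> \<le> measure_pmf.prob (Pi_pmf {n1<..n} False (\<lambda>i. bernoulli_pmf (pd (xs i))))
                {ys. split_stat Lam G pd n1 n xs ys < s}"
  unfolding quantile_pmf_less_iff[OF finite_set_boot_dist assms]
  by (simp add: boot_dist_def vimage_def)

lemma prob_split_stat_greater_quantile_le:
  assumes "finite Lam" "Lam \<noteq> {}" "0 \<le> \<alpha>" "\<alpha> < 1"
    and a: "\<And>j. j \<in> {n1<..n} \<Longrightarrow> 0 \<le> a j \<and> a j \<le> pd (xs j) \<and> pd (xs j) \<le> 1"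
  shows "measure_pmf.prob (Pi_pmf {n1<..n} False (\<lambda>j. bernoulli_pmf (a j)))
           {ys. quantile_pmf (boot_dist Lam G pd n1 n xs) \<alpha> < split_stat Lam G pd n1 n xs ys} \<le> \<alpha>"
proof -
  let ?\<tau> = "quantile_pmf (boot_dist Lam G pd n1 n xs) \<alpha>"
  let ?R = "{ys. ?\<tau> < split_stat Lam G pd n1 n xs ys}"
  have "mono (\<lambda>ys. indicator ?R ys :: ennreal)"
    using split_stat_mono[OF assms(1,2), of G pd n1 n xs]
    by (auto simp: mono_def indicator_def intro: less_le_trans)
  then have "(\<integral>\<^sup>+ys. indicator ?R ys \<partial>Pi_pmf {n1<..n} False (\<lambda>j. bernoulli_pmf (a j)))
      \<le> (\<integral>\<^sup>+ys. indicator ?R ys \<partial>Pi_pmf {n1<..n} False (\<lambda>j. bernoulli_pmf (pd (xs j))))"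
    using a by (intro nn_integral_Pi_pmf_bernoulli_mono) auto
  then have "emeasure (Pi_pmf {n1<..n} False (\<lambda>j. bernoulli_pmf (a j))) ?R
      \<le> emeasure (Pi_pmf {n1<..n} False (\<lambda>j. bernoulli_pmf (pd (xs j)))) ?R"
    by simp
  also have "\<dots> = emeasure (boot_dist Lam G pd n1 n xs) {s. ?\<tau> < s}"
    by (simp add: boot_dist_def vimage_def)
  also have "\<dots> \<le> ennreal \<alpha>"
    using prob_greater_quantile_pmf_le[OF finite_set_boot_dist[of Lam G pd n1 n xs] assms(3,4)]
    by (simp add: measure_pmf.emeasure_eq_measure ennreal_leI)
  finally show ?thesis
    using assms(3) by (simp add: measure_pmf.emeasure_eq_measure)
qed

lemma pred_split_stat_greater_quantile:
  fixes G :: "'k \<Rightarrow> 'l \<Rightarrow> 'x \<Rightarrow> real" and xs :: "'k \<Rightarrow> nat \<Rightarrow> 'x" and ys :: "'k \<Rightarrow> nat \<Rightarrow> bool"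
  assumes "finite Lam" "0 \<le> \<alpha>" "\<alpha> < 1" "\<And>x. 0 \<le> pd x \<and> pd x \<le> 1"
    and G: "\<And>l i. l \<in> Lam \<Longrightarrow> i \<in> {n1<..n} \<Longrightarrow> (\<lambda>k. G k l (xs k i)) \<in> borel_measurable K"
    and pd: "\<And>i. i \<in> {n1<..n} \<Longrightarrow> (\<lambda>k. pd (xs k i)) \<in> borel_measurable K"
    and ys: "\<And>i. i \<in> {n1<..n} \<Longrightarrow> (\<lambda>k. ys k i) \<in> measurable K (count_space UNIV)"
  shows "{k \<in> space K. quantile_pmf (boot_dist Lam (G k) pd n1 n (xs k)) \<alpha>
                         < split_stat Lam (G k) pd n1 n (xs k) (ys k)} \<in> sets K"
proof -
  let ?S = "\<lambda>k ys'. split_stat Lam (G k) pd n1 n (xs k) ys'"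
  let ?P = "\<lambda>k. Pi_pmf {n1<..n} False (\<lambda>i. bernoulli_pmf (pd (xs k i)))"
  have [measurable]: "(\<lambda>k. ?S k (ys k)) \<in> borel_measurable K"
    using assms(1) G pd ys by (rule borel_measurable_split_stat)
  have [measurable]: "(\<lambda>k. ?S k ys') \<in> borel_measurable K" for ys'
    using assms(1) G pd by (rule borel_measurable_split_stat[where ys = "\<lambda>_. ys'"]) auto
  have "(\<lambda>k. \<integral>\<^sup>+ys'. indicator {ys'. ?S k ys' < ?S k (ys k)} ys' \<partial>?P k) \<in> borel_measurable K"
    using assms(4) pd by (intro borel_measurable_nn_integral_Pi_bernoulli) auto
  then have "{k \<in> space K. ennreal (1 - \<alpha>) \<le> emeasure (?P k) {ys'. ?S k ys' < ?S k (ys k)}} \<in> sets K"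
    by simp
  also have "{k \<in> space K. ennreal (1 - \<alpha>) \<le> emeasure (?P k) {ys'. ?S k ys' < ?S k (ys k)}}
      = {k \<in> space K. quantile_pmf (boot_dist Lam (G k) pd n1 n (xs k)) \<alpha> < ?S k (ys k)}"
    unfolding quantile_boot_dist_less_iff[OF assms(2,3)]
    by (simp add: measure_pmf.emeasure_eq_measure)
  finally show ?thesis .
qed

section \<open>Samples of labelled observations\<close>

lemma nn_integral_cond_prob_eq:
  fixes M :: "'a measure" and X0 :: "'a \<Rightarrow> 'x"
  assumes "prob_space M" and [measurable]: "X0 \<in> measurable M Mx" "Measurable.pred M P"
    and [measurable]: "q \<in> borel_measurable Mx" and q: "\<And>x. 0 \<le> q x \<and> q x \<le> 1"
    and cond: "\<And>B. B \<in> sets Mx \<Longrightarrow> measure M {\<omega>\<in>space M. X0 \<omega> \<in> B \<and> P \<omega>}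
                 = (\<integral>\<omega>. indicator B (X0 \<omega>) * q (X0 \<omega>) \<partial>M)"
    and [measurable]: "f \<in> borel_measurable Mx"
  shows "(\<integral>\<^sup>+\<omega>. indicator {\<omega>\<in>space M. P \<omega>} \<omega> * f (X0 \<omega>) \<partial>M)
       = (\<integral>\<^sup>+\<omega>. ennreal (q (X0 \<omega>)) * f (X0 \<omega>) \<partial>M)"
proof -
  interpret prob_space M by fact
  define N1 where "N1 = distr (density M (indicator {\<omega>\<in>space M. P \<omega>})) Mx X0"
  define N2 where "N2 = distr (density M (\<lambda>\<omega>. ennreal (q (X0 \<omega>)))) Mx X0"
  have "N1 = N2"
  proof (rule measure_eqI)
    fix B assume "B \<in> sets N1"
    then have [measurable]: "B \<in> sets Mx" by (simp add: N1_def)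
    have "emeasure N1 B
        = (\<integral>\<^sup>+\<omega>. indicator {\<omega>\<in>space M. P \<omega>} \<omega> * indicator (X0 -` B \<inter> space M) \<omega> \<partial>M)"
      unfolding N1_def by (simp add: emeasure_distr emeasure_density)
    also have "\<dots> = (\<integral>\<^sup>+\<omega>. indicator {\<omega>\<in>space M. X0 \<omega> \<in> B \<and> P \<omega>} \<omega> \<partial>M)"
      by (intro nn_integral_cong) (simp split: split_indicator)
    also have "\<dots> = emeasure M {\<omega>\<in>space M. X0 \<omega> \<in> B \<and> P \<omega>}"
      by simp
    also have "\<dots> = ennreal (\<integral>\<omega>. indicator B (X0 \<omega>) * q (X0 \<omega>) \<partial>M)"
      by (simp add: emeasure_eq_measure cond)
    also have "\<dots> = (\<integral>\<^sup>+\<omega>. ennreal (indicator B (X0 \<omega>) * q (X0 \<omega>)) \<partial>M)"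
      using q by (intro nn_integral_eq_integral[symmetric] integrable_const_bound[where B = 1])
        (auto split: split_indicator)
    also have "\<dots> = (\<integral>\<^sup>+\<omega>. ennreal (q (X0 \<omega>)) * indicator (X0 -` B \<inter> space M) \<omega> \<partial>M)"
      by (intro nn_integral_cong) (simp split: split_indicator)
    also have "\<dots> = emeasure N2 B"
      unfolding N2_def by (simp add: emeasure_distr emeasure_density)
    finally show "emeasure N1 B = emeasure N2 B" .
  qed (simp add: N1_def N2_def)
  then have "(\<integral>\<^sup>+x. f x \<partial>N1) = (\<integral>\<^sup>+x. f x \<partial>N2)" by simp
  then show ?thesis
    unfolding N1_def N2_def by (simp add: nn_integral_distr nn_integral_density)
qed

lemma cond_prob_compl:
  fixes M :: "'a measure" and X0 :: "'a \<Rightarrow> 'x"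
  assumes "prob_space M" and [measurable]: "X0 \<in> measurable M Mx" "Measurable.pred M P"
    and [measurable]: "q \<in> borel_measurable Mx" and q: "\<And>x. 0 \<le> q x \<and> q x \<le> 1"
    and cond: "\<And>B. B \<in> sets Mx \<Longrightarrow> measure M {\<omega>\<in>space M. X0 \<omega> \<in> B \<and> P \<omega>}
                 = (\<integral>\<omega>. indicator B (X0 \<omega>) * q (X0 \<omega>) \<partial>M)"
    and [measurable]: "B \<in> sets Mx"
  shows "measure M {\<omega>\<in>space M. X0 \<omega> \<in> B \<and> \<not> P \<omega>}
           = (\<integral>\<omega>. indicator B (X0 \<omega>) * (1 - q (X0 \<omega>)) \<partial>M)"
proof -
  interpret prob_space M by fact
  let ?A = "{\<omega>\<in>space M. X0 \<omega> \<in> B}"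
  have "measure M {\<omega>\<in>space M. X0 \<omega> \<in> B \<and> \<not> P \<omega>} = measure M (?A - {\<omega>\<in>space M. P \<omega>})"
    by (rule arg_cong[where f = "measure M"]) auto
  also have "\<dots> = measure M ?A - measure M {\<omega>\<in>space M. X0 \<omega> \<in> B \<and> P \<omega>}"
    by (subst finite_measure_Diff') (auto intro: arg_cong[where f = "measure M"])
  also have "measure M ?A = (\<integral>\<omega>. indicator ?A \<omega> \<partial>M)"
    by (simp add: Int_absorb2)
  also have "\<dots> = (\<integral>\<omega>. indicator B (X0 \<omega>) \<partial>M)"
    by (intro Bochner_Integration.integral_cong) (simp_all split: split_indicator)
  also have "(\<integral>\<omega>. indicator B (X0 \<omega>) \<partial>M) - measure M {\<omega>\<in>space M. X0 \<omega> \<in> B \<and> P \<omega>}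
      = (\<integral>\<omega>. indicator B (X0 \<omega>) - indicator B (X0 \<omega>) * q (X0 \<omega>) \<partial>M)"
    unfolding cond[OF \<open>B \<in> sets Mx\<close>] using q
    by (intro Bochner_Integration.integral_diff[symmetric] integrable_const_bound[where B = 1])
      (auto split: split_indicator)
  finally show ?thesis
    by (simp add: algebra_simps)
qed

lemma nn_integral_Pi_bernoulli_insert:
  fixes F :: "'x \<Rightarrow> ('i \<Rightarrow> bool) \<Rightarrow> ennreal" and xs :: "'i \<Rightarrow> 'x"
  assumes "finite N" "i \<notin> N" and [measurable]: "p \<in> borel_measurable PX"
    and p: "\<And>x. 0 \<le> p x \<and> p x \<le> 1" and [measurable]: "\<And>ys. (\<lambda>x. F x ys) \<in> borel_measurable PX"
  shows "(\<integral>\<^sup>+ys. \<integral>\<^sup>+x. \<integral>\<^sup>+b. F x (ys(i := b)) \<partial>bernoulli_pmf (p x) \<partial>PX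
            \<partial>Pi_pmf N False (\<lambda>j. bernoulli_pmf (p (xs j))))
       = (\<integral>\<^sup>+x. \<integral>\<^sup>+ys. F x ys \<partial>Pi_pmf (insert i N) False (\<lambda>j. bernoulli_pmf (p ((xs(i := x)) j))) \<partial>PX)"
proof -
  let ?P = "Pi_pmf N False (\<lambda>j. bernoulli_pmf (p (xs j)))"
  have meas: "(\<lambda>x. \<integral>\<^sup>+b. F x (ys(i := b)) \<partial>bernoulli_pmf (p x)) \<in> borel_measurable PX" for ys
    using p by simp
  have "(\<integral>\<^sup>+ys. \<integral>\<^sup>+x. \<integral>\<^sup>+b. F x (ys(i := b)) \<partial>bernoulli_pmf (p x) \<partial>PX \<partial>?P)
      = (\<integral>\<^sup>+x. \<integral>\<^sup>+ys. \<integral>\<^sup>+b. F x (ys(i := b)) \<partial>bernoulli_pmf (p x) \<partial>?P \<partial>PX)"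
    using finite_set_Pi_pmf[OF \<open>finite N\<close>] meas by (rule nn_integral_measure_pmf_swap)
  also have "\<dots> = (\<integral>\<^sup>+x. \<integral>\<^sup>+b. \<integral>\<^sup>+ys. F x (ys(i := b)) \<partial>?P \<partial>bernoulli_pmf (p x) \<partial>PX)"
    using finite_set_Pi_pmf[OF \<open>finite N\<close>]
    by (intro nn_integral_cong nn_integral_measure_pmf_swap) auto
  also have "\<dots> = (\<integral>\<^sup>+x. \<integral>\<^sup>+ys. F x ys
                     \<partial>Pi_pmf (insert i N) False (\<lambda>j. bernoulli_pmf (p ((xs(i := x)) j))) \<partial>PX)"
  proof (intro nn_integral_cong)
    fix x
    have "Pi_pmf N False (\<lambda>j. bernoulli_pmf (p ((xs(i := x)) j))) = ?P"
      using \<open>i \<notin> N\<close> by (intro Pi_pmf_cong) auto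
    then show "(\<integral>\<^sup>+b. \<integral>\<^sup>+ys. F x (ys(i := b)) \<partial>?P \<partial>bernoulli_pmf (p x))
        = (\<integral>\<^sup>+ys. F x ys \<partial>Pi_pmf (insert i N) False (\<lambda>j. bernoulli_pmf (p ((xs(i := x)) j))))"
      using assms(1,2) by (simp add: Pi_pmf_insert nn_integral_pair_pmf')
  qed
  finally show ?thesis .
qed

text \<open>The law \<open>Q\<close> of a labelled observation \<open>(x, y)\<close>: \<open>x\<close> has law \<open>PX\<close> and, given \<open>x\<close>,
  the label \<open>y\<close> is Bernoulli(\<open>p x\<close>).\<close>
locale bernoulli_labels =
  fixes Q :: "('x \<times> bool) measure" and PX :: "'x measure" and p :: "'x \<Rightarrow> real"
  assumes prob_space_Q: "prob_space Q" and prob_space_PX: "prob_space PX"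
    and sets_Q: "sets Q = sets (PX \<Otimes>\<^sub>M count_space UNIV)"
    and borel_measurable_p[measurable]: "p \<in> borel_measurable PX"
    and p_01: "\<And>x. 0 \<le> p x \<and> p x \<le> 1"
    and nn_integral_Q: "\<And>h. h \<in> borel_measurable Q \<Longrightarrow>
      (\<integral>\<^sup>+z. h z \<partial>Q) = (\<integral>\<^sup>+x. \<integral>\<^sup>+b. h (x, b) \<partial>bernoulli_pmf (p x) \<partial>PX)"
begin

lemma measurable_Pair_label[measurable]: "(\<lambda>x. (x, b)) \<in> measurable PX Q"
  unfolding measurable_cong_sets[OF refl sets_Q] by measurable

lemma measurable_restrict_Pair_labels[measurable]:
  "(\<lambda>xs. \<lambda>j\<in>A. (xs j, ys j)) \<in> measurable (PiM A (\<lambda>_. PX)) (PiM A (\<lambda>_. Q))"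
  by (intro measurable_restrict) measurable

lemma nn_integral_Q_upd:
  assumes "z \<in> space (PiM N (\<lambda>_. Q))" "i \<notin> N" "H \<in> borel_measurable (PiM (insert i N) (\<lambda>_. Q))"
  shows "(\<integral>\<^sup>+y. H (z(i := y)) \<partial>Q) = (\<integral>\<^sup>+x. \<integral>\<^sup>+b. H (z(i := (x, b))) \<partial>bernoulli_pmf (p x) \<partial>PX)"
  using measurable_compose[OF measurable_component_update[OF assms(1,2)] assms(3)]
  by (rule nn_integral_Q)

lemma nn_integral_PiM_insert:
  fixes N :: "'i set"
  assumes "finite N" "i \<notin> N" and [measurable]: "H \<in> borel_measurable (PiM (insert i N) (\<lambda>_. Q))"
  shows "(\<integral>\<^sup>+xs. \<integral>\<^sup>+ys. \<integral>\<^sup>+x. \<integral>\<^sup>+b. H (\<lambda>j\<in>insert i N. ((xs(i := x)) j, (ys(i := b)) j))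
            \<partial>bernoulli_pmf (p x) \<partial>PX \<partial>Pi_pmf N False (\<lambda>j. bernoulli_pmf (p (xs j))) \<partial>PiM N (\<lambda>_. PX))
       = (\<integral>\<^sup>+xs. \<integral>\<^sup>+ys. H (\<lambda>j\<in>insert i N. (xs j, ys j))
            \<partial>Pi_pmf (insert i N) False (\<lambda>j. bernoulli_pmf (p (xs j))) \<partial>PiM (insert i N) (\<lambda>_. PX))"
proof -
  interpret PXs: product_sigma_finite "\<lambda>_. PX"
    unfolding product_sigma_finite_def using prob_space_imp_sigma_finite[OF prob_space_PX] by simp
  let ?F = "\<lambda>xs ys. H (\<lambda>j\<in>insert i N. (xs j, ys j))"
  let ?P = "\<lambda>xs. Pi_pmf (insert i N) False (\<lambda>j. bernoulli_pmf (p (xs j)))"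
  have "(\<integral>\<^sup>+xs. \<integral>\<^sup>+ys. \<integral>\<^sup>+x. \<integral>\<^sup>+b. ?F (xs(i := x)) (ys(i := b))
            \<partial>bernoulli_pmf (p x) \<partial>PX \<partial>Pi_pmf N False (\<lambda>j. bernoulli_pmf (p (xs j))) \<partial>PiM N (\<lambda>_. PX))
      = (\<integral>\<^sup>+xs. \<integral>\<^sup>+x. \<integral>\<^sup>+ys. ?F (xs(i := x)) ys \<partial>?P (xs(i := x)) \<partial>PX \<partial>PiM N (\<lambda>_. PX))"
  proof (intro nn_integral_cong nn_integral_Pi_bernoulli_insert)
    fix xs ys assume "xs \<in> space (PiM N (\<lambda>_. PX))"
    then show "(\<lambda>x. ?F (xs(i := x)) ys) \<in> borel_measurable PX"
      using \<open>i \<notin> N\<close> by measurable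
  qed (use assms p_01 in auto)
  also have "\<dots> = (\<integral>\<^sup>+xs. \<integral>\<^sup>+ys. ?F xs ys \<partial>?P xs \<partial>PiM (insert i N) (\<lambda>_. PX))"
  proof (rule PXs.product_nn_integral_insert[symmetric])
    show "(\<lambda>xs. \<integral>\<^sup>+ys. ?F xs ys \<partial>?P xs) \<in> borel_measurable (PiM (insert i N) (\<lambda>_. PX))"
      using assms p_01 by (intro borel_measurable_nn_integral_Pi_bernoulli) auto
  qed (use assms in auto)
  finally show ?thesis .
qed

lemma nn_integral_PiM:
  fixes N :: "'i set"
  assumes "finite N" "H \<in> borel_measurable (PiM N (\<lambda>_. Q))"
  shows "(\<integral>\<^sup>+z. H z \<partial>PiM N (\<lambda>_. Q))
      = (\<integral>\<^sup>+xs. \<integral>\<^sup>+ys. H (\<lambda>j\<in>N. (xs j, ys j)) \<partial>Pi_pmf N False (\<lambda>j. bernoulli_pmf (p (xs j)))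
           \<partial>PiM N (\<lambda>_. PX))"
  using assms
proof (induction N arbitrary: H rule: finite_induct)
  case empty
  then show ?case by (simp add: PiM_empty nn_integral_count_space_finite)
next
  case (insert i N)
  interpret Qs: product_sigma_finite "\<lambda>_. Q"
    unfolding product_sigma_finite_def using prob_space_imp_sigma_finite[OF prob_space_Q] by simp
  note [measurable] = insert.prems
  let ?P = "\<lambda>xs. Pi_pmf N False (\<lambda>j. bernoulli_pmf (p (xs j)))"
  let ?z = "\<lambda>A xs ys. \<lambda>j\<in>A. (xs j, ys j)"
  have "(\<integral>\<^sup>+z. H z \<partial>PiM (insert i N) (\<lambda>_. Q))
      = (\<integral>\<^sup>+z. \<integral>\<^sup>+y. H (z(i := y)) \<partial>Q \<partial>PiM N (\<lambda>_. Q))"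
    using insert.hyps insert.prems by (rule Qs.product_nn_integral_insert)
  also have "\<dots> = (\<integral>\<^sup>+xs. \<integral>\<^sup>+ys. \<integral>\<^sup>+y. H ((?z N xs ys)(i := y)) \<partial>Q \<partial>?P xs \<partial>PiM N (\<lambda>_. PX))"
    by (rule insert.IH) measurable
  also have "\<dots> = (\<integral>\<^sup>+xs. \<integral>\<^sup>+ys. \<integral>\<^sup>+x. \<integral>\<^sup>+b. H (?z (insert i N) (xs(i := x)) (ys(i := b)))
                     \<partial>bernoulli_pmf (p x) \<partial>PX \<partial>?P xs \<partial>PiM N (\<lambda>_. PX))"
  proof (intro nn_integral_cong)
    fix xs ys assume "xs \<in> space (PiM N (\<lambda>_. PX))"
    then have "?z N xs ys \<in> space (PiM N (\<lambda>_. Q))"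
      by (rule measurable_space[OF measurable_restrict_Pair_labels])
    then have "(\<integral>\<^sup>+y. H ((?z N xs ys)(i := y)) \<partial>Q)
        = (\<integral>\<^sup>+x. \<integral>\<^sup>+b. H ((?z N xs ys)(i := (x, b))) \<partial>bernoulli_pmf (p x) \<partial>PX)"
      using insert.hyps(2) insert.prems by (rule nn_integral_Q_upd)
    moreover have "(?z N xs ys)(i := (x, b)) = ?z (insert i N) (xs(i := x)) (ys(i := b))" for x b
      using insert.hyps(2) by (auto simp: fun_eq_iff)
    ultimately show "(\<integral>\<^sup>+y. H ((?z N xs ys)(i := y)) \<partial>Q)
        = (\<integral>\<^sup>+x. \<integral>\<^sup>+b. H (?z (insert i N) (xs(i := x)) (ys(i := b))) \<partial>bernoulli_pmf (p x) \<partial>PX)"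
      by (simp only:)
  qed
  also have "\<dots> = (\<integral>\<^sup>+xs. \<integral>\<^sup>+ys. H (?z (insert i N) xs ys)
                     \<partial>Pi_pmf (insert i N) False (\<lambda>j. bernoulli_pmf (p (xs j))) \<partial>PiM (insert i N) (\<lambda>_. PX))"
    using insert.hyps insert.prems by (rule nn_integral_PiM_insert)
  finally show ?case .
qed

lemma emeasure_PiM_le:
  fixes N :: "'i set"
  assumes "finite N" and [measurable]: "Measurable.pred (PiM N (\<lambda>_. Q)) R"
    and bound: "AE xs in PiM N (\<lambda>_. PX). measure_pmf.prob (Pi_pmf N False (\<lambda>j. bernoulli_pmf (p (xs j))))
      {ys. R (\<lambda>j\<in>N. (xs j, ys j))} \<le> \<alpha>"
  shows "emeasure (PiM N (\<lambda>_. Q)) {z \<in> space (PiM N (\<lambda>_. Q)). R z} \<le> ennreal \<alpha>"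
proof -
  interpret PXN: prob_space "PiM N (\<lambda>_. PX)"
    using prob_space_PX by (intro prob_space_PiM)
  let ?B = "{z \<in> space (PiM N (\<lambda>_. Q)). R z}"
  have "emeasure (PiM N (\<lambda>_. Q)) ?B
      = (\<integral>\<^sup>+xs. \<integral>\<^sup>+ys. indicator ?B (\<lambda>j\<in>N. (xs j, ys j))
           \<partial>Pi_pmf N False (\<lambda>j. bernoulli_pmf (p (xs j))) \<partial>PiM N (\<lambda>_. PX))"
    using \<open>finite N\<close> by (simp flip: nn_integral_PiM)
  also have "\<dots> \<le> (\<integral>\<^sup>+xs. ennreal \<alpha> \<partial>PiM N (\<lambda>_. PX))"
    using bound
  proof (rule nn_integral_mono_AE[OF eventually_mono])
    fix xs :: "'i \<Rightarrow> 'x"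
    let ?z = "\<lambda>ys. \<lambda>j\<in>N. (xs j, ys j)"
    let ?P = "Pi_pmf N False (\<lambda>j. bernoulli_pmf (p (xs j)))"
    assume "measure_pmf.prob ?P {ys. R (?z ys)} \<le> \<alpha>"
    moreover have "(\<integral>\<^sup>+ys. indicator ?B (?z ys) \<partial>?P) \<le> (\<integral>\<^sup>+ys. indicator {ys. R (?z ys)} ys \<partial>?P)"
      by (intro nn_integral_mono) (simp split: split_indicator)
    ultimately show "(\<integral>\<^sup>+ys. indicator ?B (?z ys) \<partial>?P) \<le> ennreal \<alpha>"
      by (simp add: measure_pmf.emeasure_eq_measure ennreal_leI order_trans)
  qed
  also have "\<dots> = ennreal \<alpha>"
    by (simp add: PXN.emeasure_space_1)
  finally show ?thesis .
qed

lemma measure_PiM_le: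
  fixes Tr N :: "'i set"
  assumes "finite Tr" "finite N" "Tr \<inter> N = {}" "0 \<le> \<alpha>"
    and [measurable]: "Measurable.pred (PiM (Tr \<union> N) (\<lambda>_. Q)) R"
    and bound: "\<And>zT. zT \<in> space (PiM Tr (\<lambda>_. Q)) \<Longrightarrow> AE xs in PiM N (\<lambda>_. PX).
       measure_pmf.prob (Pi_pmf N False (\<lambda>j. bernoulli_pmf (p (xs j))))
         {ys. R (merge Tr N (zT, \<lambda>j\<in>N. (xs j, ys j)))} \<le> \<alpha>"
  shows "measure (PiM (Tr \<union> N) (\<lambda>_. Q)) {z \<in> space (PiM (Tr \<union> N) (\<lambda>_. Q)). R z} \<le> \<alpha>"
proof -
  interpret Qs: product_sigma_finite "\<lambda>_. Q"
    unfolding product_sigma_finite_def using prob_space_imp_sigma_finite[OF prob_space_Q] by simp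
  interpret QTr: prob_space "PiM Tr (\<lambda>_. Q)"
    using prob_space_Q by (intro prob_space_PiM)
  let ?B = "{z \<in> space (PiM (Tr \<union> N) (\<lambda>_. Q)). R z}"
  have inner: "(\<integral>\<^sup>+zN. indicator ?B (merge Tr N (zT, zN)) \<partial>PiM N (\<lambda>_. Q)) \<le> ennreal \<alpha>"
    if zT: "zT \<in> space (PiM Tr (\<lambda>_. Q))" for zT
  proof -
    have "merge Tr N (zT, zN) \<in> space (PiM (Tr \<union> N) (\<lambda>_. Q))" if "zN \<in> space (PiM N (\<lambda>_. Q))" for zN
      using measurable_space[OF measurable_merge, of "(zT, zN)"] zT that by (simp add: space_pair_measure)
    then have "(\<integral>\<^sup>+zN. indicator ?B (merge Tr N (zT, zN)) \<partial>PiM N (\<lambda>_. Q))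
        = (\<integral>\<^sup>+zN. indicator {zN \<in> space (PiM N (\<lambda>_. Q)). R (merge Tr N (zT, zN))} zN \<partial>PiM N (\<lambda>_. Q))"
      by (intro nn_integral_cong) (simp split: split_indicator)
    also have "\<dots> = emeasure (PiM N (\<lambda>_. Q)) {zN \<in> space (PiM N (\<lambda>_. Q)). R (merge Tr N (zT, zN))}"
      using zT by (intro nn_integral_indicator) measurable
    also have "\<dots> \<le> ennreal \<alpha>"
      using zT bound[OF zT] by (intro emeasure_PiM_le \<open>finite N\<close>) measurable
    finally show ?thesis .
  qed
  have "emeasure (PiM (Tr \<union> N) (\<lambda>_. Q)) ?B
      = (\<integral>\<^sup>+zT. \<integral>\<^sup>+zN. indicator ?B (merge Tr N (zT, zN)) \<partial>PiM N (\<lambda>_. Q) \<partial>PiM Tr (\<lambda>_. Q))"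
    using assms(1-3) by (simp add: Qs.product_nn_integral_fold flip: nn_integral_indicator)
  also have "\<dots> \<le> (\<integral>\<^sup>+zT. ennreal \<alpha> \<partial>PiM Tr (\<lambda>_. Q))"
    by (intro nn_integral_mono inner)
  also have "\<dots> = ennreal \<alpha>"
    by (simp add: QTr.emeasure_space_1)
  finally show ?thesis
    using \<open>0 \<le> \<alpha>\<close> by (simp add: measure_def enn2real_leI)
qed

end

lemma bernoulli_labels_distr:
  fixes M :: "'a measure" and X0 :: "'a \<Rightarrow> 'x"
  assumes "prob_space M" and [measurable]: "X0 \<in> measurable M Mx"
      "Y0 \<in> measurable M (count_space UNIV)" "p0 \<in> borel_measurable Mx"
    and p0: "\<And>x. 0 \<le> p0 x \<and> p0 x \<le> 1"
    and cond: "\<And>B. B \<in> sets Mx \<Longrightarrow> measure M {\<omega>\<in>space M. X0 \<omega> \<in> B \<and> Y0 \<omega>}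
                 = (\<integral>\<omega>. indicator B (X0 \<omega>) * p0 (X0 \<omega>) \<partial>M)"
  shows "bernoulli_labels (distr M (Mx \<Otimes>\<^sub>M count_space UNIV) (\<lambda>\<omega>. (X0 \<omega>, Y0 \<omega>))) (distr M Mx X0) p0"
proof (rule bernoulli_labels.intro)
  interpret prob_space M by fact
  show "prob_space (distr M (Mx \<Otimes>\<^sub>M count_space UNIV) (\<lambda>\<omega>. (X0 \<omega>, Y0 \<omega>)))" "prob_space (distr M Mx X0)"
    by (auto intro!: prob_space_distr)
  show "sets (distr M (Mx \<Otimes>\<^sub>M count_space UNIV) (\<lambda>\<omega>. (X0 \<omega>, Y0 \<omega>)))
      = sets (distr M Mx X0 \<Otimes>\<^sub>M count_space UNIV)"
    by (auto intro!: sets_pair_measure_cong)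
  fix h :: "'x \<times> bool \<Rightarrow> ennreal"
  assume [measurable]: "h \<in> borel_measurable (distr M (Mx \<Otimes>\<^sub>M count_space UNIV) (\<lambda>\<omega>. (X0 \<omega>, Y0 \<omega>)))"
  have "(\<integral>\<^sup>+z. h z \<partial>distr M (Mx \<Otimes>\<^sub>M count_space UNIV) (\<lambda>\<omega>. (X0 \<omega>, Y0 \<omega>)))
      = (\<integral>\<^sup>+\<omega>. indicator {\<omega>\<in>space M. Y0 \<omega>} \<omega> * h (X0 \<omega>, True)
             + indicator {\<omega>\<in>space M. \<not> Y0 \<omega>} \<omega> * h (X0 \<omega>, False) \<partial>M)"
    by (simp add: nn_integral_distr) (auto intro!: nn_integral_cong split: split_indicator)
  also have "\<dots> = (\<integral>\<^sup>+\<omega>. ennreal (p0 (X0 \<omega>)) * h (X0 \<omega>, True)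
                     + ennreal (1 - p0 (X0 \<omega>)) * h (X0 \<omega>, False) \<partial>M)"
    using nn_integral_cond_prob_eq[OF assms(1,2), of Y0 p0 "\<lambda>x. h (x, True)"]
      nn_integral_cond_prob_eq[OF assms(1,2), of "\<lambda>\<omega>. \<not> Y0 \<omega>" "\<lambda>x. 1 - p0 x" "\<lambda>x. h (x, False)"]
      cond_prob_compl[OF assms(1,2), of Y0 p0] p0 cond
    by (simp add: nn_integral_add)
  also have "\<dots> = (\<integral>\<^sup>+x. \<integral>\<^sup>+b. h (x, b) \<partial>bernoulli_pmf (p0 x) \<partial>distr M Mx X0)"
    using p0 by (simp add: nn_integral_distr mult.commute)
  finally show "(\<integral>\<^sup>+z. h z \<partial>distr M (Mx \<Otimes>\<^sub>M count_space UNIV) (\<lambda>\<omega>. (X0 \<omega>, Y0 \<omega>)))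
      = (\<integral>\<^sup>+x. \<integral>\<^sup>+b. h (x, b) \<partial>bernoulli_pmf (p0 x) \<partial>distr M Mx X0)" .
qed (use p0 in auto)

section \<open>Type I error of the split test\<close>

definition split_rejects ::
  "'l set \<Rightarrow> ('l \<Rightarrow> (nat \<Rightarrow> 'x \<times> bool) \<Rightarrow> 'x \<Rightarrow> real) \<Rightarrow> ('x \<Rightarrow> real) \<Rightarrow> nat \<Rightarrow> nat \<Rightarrow> real
     \<Rightarrow> (nat \<Rightarrow> 'x \<times> bool) \<Rightarrow> bool" where
  "split_rejects Lam g pd n1 n \<alpha> z \<longleftrightarrow>
     (let G = (\<lambda>l. g l (restrict z {1..n1}))
      in quantile_pmf (boot_dist Lam G pd n1 n (\<lambda>i. fst (z i))) \<alpha>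
           < split_stat Lam G pd n1 n (\<lambda>i. fst (z i)) (\<lambda>i. snd (z i)))"

lemma split_rejects_restrict:
  fixes g :: "'l \<Rightarrow> (nat \<Rightarrow> 'x \<times> bool) \<Rightarrow> 'x \<Rightarrow> real"
  assumes "n1 \<le> n"
  shows "split_rejects Lam g pd n1 n \<alpha> (restrict z {1..n}) = split_rejects Lam g pd n1 n \<alpha> z"
proof -
  have "restrict (restrict z {1..n}) {1..n1} = restrict z {1..n1}"
    using assms by auto
  moreover have "split_stat Lam G pd n1 n (\<lambda>i. fst (restrict z {1..n} i)) (\<lambda>i. snd (restrict z {1..n} i))
      = split_stat Lam G pd n1 n (\<lambda>i. fst (z i)) (\<lambda>i. snd (z i))"
    "boot_dist Lam G pd n1 n (\<lambda>i. fst (restrict z {1..n} i)) = boot_dist Lam G pd n1 n (\<lambda>i. fst (z i))"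
    for G :: "'l \<Rightarrow> 'x \<Rightarrow> real"
    by (auto intro!: split_stat_cong boot_dist_cong)
  ultimately show ?thesis
    unfolding split_rejects_def Let_def by simp
qed

lemma split_rejects_merge:
  fixes g :: "'l \<Rightarrow> (nat \<Rightarrow> 'x \<times> bool) \<Rightarrow> 'x \<Rightarrow> real"
  shows "split_rejects Lam g pd n1 n \<alpha> (merge {1..n1} {n1<..n} (zT, \<lambda>j\<in>{n1<..n}. (xs j, ys j)))
     \<longleftrightarrow> quantile_pmf (boot_dist Lam (\<lambda>l. g l (restrict zT {1..n1})) pd n1 n xs) \<alpha>
           < split_stat Lam (\<lambda>l. g l (restrict zT {1..n1})) pd n1 n xs ys"
proof -
  let ?z = "merge {1..n1} {n1<..n} (zT, \<lambda>j\<in>{n1<..n}. (xs j, ys j))"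
  have "restrict ?z {1..n1} = restrict zT {1..n1}"
    by (auto simp: merge_def)
  moreover have "split_stat Lam G pd n1 n (\<lambda>i. fst (?z i)) (\<lambda>i. snd (?z i)) = split_stat Lam G pd n1 n xs ys"
    "boot_dist Lam G pd n1 n (\<lambda>i. fst (?z i)) = boot_dist Lam G pd n1 n xs"
    for G :: "'l \<Rightarrow> 'x \<Rightarrow> real"
    by (auto intro!: split_stat_cong boot_dist_cong simp: merge_def)
  ultimately show ?thesis
    unfolding split_rejects_def Let_def by simp
qed

lemma pred_split_rejects:
  assumes "finite Lam" "0 \<le> \<alpha>" "\<alpha> < 1" "n1 \<le> n" "sets Q = sets (Mx \<Otimes>\<^sub>M count_space UNIV)"
    and [measurable]: "pd \<in> borel_measurable Mx" and pd: "\<And>x. 0 \<le> pd x \<and> pd x \<le> 1"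
    and g: "\<And>l. l \<in> Lam \<Longrightarrow> (\<lambda>(D, x). g l D x)
      \<in> borel_measurable ((\<Pi>\<^sub>M i\<in>{1..n1}. Mx \<Otimes>\<^sub>M count_space UNIV) \<Otimes>\<^sub>M Mx)"
  shows "Measurable.pred (\<Pi>\<^sub>M i\<in>{1..n}. Q) (split_rejects Lam g pd n1 n \<alpha>)"
proof -
  let ?K = "\<Pi>\<^sub>M i\<in>{1..n}. Mx \<Otimes>\<^sub>M count_space UNIV"
  have comp[measurable]: "(\<lambda>z. z i) \<in> measurable ?K (Mx \<Otimes>\<^sub>M count_space UNIV)" if "i \<in> {n1<..n}" for i
    using that by (intro measurable_component_singleton) auto
  have pair: "(\<lambda>z. (restrict z {1..n1}, fst (z i)))
      \<in> measurable ?K ((\<Pi>\<^sub>M i\<in>{1..n1}. Mx \<Otimes>\<^sub>M count_space UNIV) \<Otimes>\<^sub>M Mx)" if "i \<in> {n1<..n}" for i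
    using that \<open>n1 \<le> n\<close> by (intro measurable_Pair measurable_restrict_subset) (auto intro: measurable_compose[OF comp])
  have "(\<lambda>z. g l (restrict z {1..n1}) (fst (z i))) \<in> borel_measurable ?K"
    if "l \<in> Lam" "i \<in> {n1<..n}" for l i
    using measurable_compose[OF pair[OF that(2)] g[OF that(1)]] by simp
  then have "{z \<in> space ?K. split_rejects Lam g pd n1 n \<alpha> z} \<in> sets ?K"
    unfolding split_rejects_def Let_def using assms(1-3) pd
    by (intro pred_split_stat_greater_quantile) auto
  then show ?thesis
    unfolding measurable_cong_sets[OF sets_PiM_cong[OF refl assms(5)] refl] pred_def .
qed

lemma AE_le_pdelta:
  assumes "prob_space M" and [measurable]: "X0 \<in> measurable M Mx" "p0 \<in> borel_measurable Mx"
    "phat \<in> borel_measurable Mx" and "\<And>x. p0 x \<le> 1"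
    and null: "measure M {\<omega>\<in>space M. p0 (X0 \<omega>) - phat (X0 \<omega>) > \<delta>} = 0"
  shows "AE x in distr M Mx X0. p0 x \<le> pdelta phat \<delta> x"
proof -
  interpret prob_space M by fact
  have "AE \<omega> in M. \<not> p0 (X0 \<omega>) - phat (X0 \<omega>) > \<delta>"
    using null by (intro AE_I'[of "{\<omega>\<in>space M. p0 (X0 \<omega>) - phat (X0 \<omega>) > \<delta>}"])
      (auto simp: null_sets_def emeasure_eq_measure)
  then have "AE \<omega> in M. p0 (X0 \<omega>) \<le> pdelta phat \<delta> (X0 \<omega>)"
    by eventually_elim (simp add: pdelta_def assms(5) le_max_iff_disj)
  then show ?thesis
    by (subst AE_distr_iff) (auto simp: pdelta_def)
qed

lemma (in prob_space) prob_iid_eq_measure_PiM: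
  assumes I: "I \<noteq> {}" and Z: "\<And>i. random_variable N (Z i)" and indep: "indep_vars (\<lambda>_. N) Z I"
    and ident: "\<And>i. i \<in> I \<Longrightarrow> distr M N (Z i) = D"
    and R: "Measurable.pred (PiM I (\<lambda>_. D)) R" "\<And>z. R (restrict z I) = R z"
  shows "prob {\<omega>\<in>space M. R (\<lambda>i. Z i \<omega>)} = measure (PiM I (\<lambda>_. D)) {z \<in> space (PiM I (\<lambda>_. D)). R z}"
proof -
  let ?Z = "\<lambda>\<omega>. \<lambda>i\<in>I. Z i \<omega>"
  obtain i where "i \<in> I" using I by blast
  then have sets_D: "sets D = sets N"
    using ident[of i] by (metis sets_distr)
  have Z_meas: "?Z \<in> measurable M (PiM I (\<lambda>_. D))"
    unfolding measurable_cong_sets[OF refl sets_PiM_cong[OF refl sets_D]] using Z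
    by (intro measurable_restrict) auto
  have "distr M (PiM I (\<lambda>_. D)) ?Z = distr M (PiM I (\<lambda>_. N)) ?Z"
    by (intro distr_cong sets_PiM_cong) (auto simp: sets_D)
  also have "\<dots> = PiM I (\<lambda>i. distr M N (Z i))"
    using indep_vars_iff_distr_eq_PiM[OF I Z] indep by simp
  also have "\<dots> = PiM I (\<lambda>_. D)"
    using ident by (intro PiM_cong) auto
  finally have distr_Z: "distr M (PiM I (\<lambda>_. D)) ?Z = PiM I (\<lambda>_. D)" .
  have "{\<omega>\<in>space M. R (\<lambda>i. Z i \<omega>)} = ?Z -` {z \<in> space (PiM I (\<lambda>_. D)). R z} \<inter> space M"
    using measurable_space[OF Z_meas] R(2) by auto
  then show ?thesis
    using measure_distr[OF Z_meas R(1)[unfolded pred_def]] distr_Z by simp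
qed

lemma measure_PiM_split_rejects_le:
  fixes Q :: "('x \<times> bool) measure" and PX :: "'x measure"
    and g :: "'l \<Rightarrow> (nat \<Rightarrow> 'x \<times> bool) \<Rightarrow> 'x \<Rightarrow> real"
  assumes "bernoulli_labels Q PX p" "sets PX = sets Mx"
    and pd: "pd \<in> borel_measurable Mx" "\<And>x. 0 \<le> pd x \<and> pd x \<le> 1"
    and dominated: "AE x in PX. p x \<le> pd x"
    and "finite Lam" "Lam \<noteq> {}" "0 \<le> \<alpha>" "\<alpha> < 1" "n1 \<le> n"
    and g: "\<And>l. l \<in> Lam \<Longrightarrow> (\<lambda>(D, x). g l D x)
      \<in> borel_measurable ((\<Pi>\<^sub>M i\<in>{1..n1}. Mx \<Otimes>\<^sub>M count_space UNIV) \<Otimes>\<^sub>M Mx)"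
  shows "measure (\<Pi>\<^sub>M i\<in>{1..n}. Q) {z \<in> space (\<Pi>\<^sub>M i\<in>{1..n}. Q). split_rejects Lam g pd n1 n \<alpha> z} \<le> \<alpha>"
proof -
  interpret bernoulli_labels Q PX p by fact
  have I: "{1..n} = {1..n1} \<union> {n1<..n}" using \<open>n1 \<le> n\<close> by auto
  show ?thesis
    unfolding I
  proof (rule measure_PiM_le)
    have "sets Q = sets (Mx \<Otimes>\<^sub>M count_space UNIV)"
      unfolding sets_Q by (intro sets_pair_measure_cong) (simp_all add: assms(2))
    then show "Measurable.pred (\<Pi>\<^sub>M i\<in>{1..n1} \<union> {n1<..n}. Q) (split_rejects Lam g pd n1 n \<alpha>)"
      unfolding I[symmetric] using assms by (intro pred_split_rejects) auto
    have "AE xs in \<Pi>\<^sub>M i\<in>{n1<..n}. PX. \<forall>j\<in>{n1<..n}. p (xs j) \<le> pd (xs j)"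
      using dominated prob_space_PX by (intro eventually_ball_finite ballI AE_PiM_component) auto
    then show "AE xs in \<Pi>\<^sub>M i\<in>{n1<..n}. PX.
        measure_pmf.prob (Pi_pmf {n1<..n} False (\<lambda>j. bernoulli_pmf (p (xs j))))
          {ys. split_rejects Lam g pd n1 n \<alpha> (merge {1..n1} {n1<..n} (zT, \<lambda>j\<in>{n1<..n}. (xs j, ys j)))}
        \<le> \<alpha>" for zT
      unfolding split_rejects_merge using assms p_01 pd(2)
      by (auto elim!: eventually_mono intro!: prob_split_stat_greater_quantile_le)
  qed (use \<open>0 \<le> \<alpha>\<close> in auto)
qed

theorem theorem1:
  fixes M :: "'a measure" and Mx :: "'x measure"
    and X :: "nat \<Rightarrow> 'a \<Rightarrow> 'x" and Y :: "nat \<Rightarrow> 'a \<Rightarrow> bool"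
    and X0 :: "'a \<Rightarrow> 'x" and Y0 :: "'a \<Rightarrow> bool"
    and p0 phat :: "'x \<Rightarrow> real" and \<delta> \<alpha> :: real
    and n n1 :: nat and Lam :: "'l set"
    and g :: "'l \<Rightarrow> (nat \<Rightarrow> 'x \<times> bool) \<Rightarrow> 'x \<Rightarrow> real"
  assumes M: "prob_space M"
    and delta: "\<delta> \<ge> 0"
    and alpha: "0 < \<alpha>" "\<alpha> < 1"
    and phat: "phat \<in> borel_measurable Mx" "\<And>x. 0 \<le> phat x \<and> phat x \<le> 1"
    and p0: "p0 \<in> borel_measurable Mx" "\<And>x. 0 \<le> p0 x \<and> p0 x \<le> 1"
    and X0Y0: "X0 \<in> measurable M Mx" "Y0 \<in> measurable M (count_space UNIV)"
    and XY: "\<And>i. X i \<in> measurable M Mx" "\<And>i. Y i \<in> measurable M (count_space UNIV)"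
    and cond: "\<forall>B\<in>sets Mx. measure M {\<omega>\<in>space M. X0 \<omega> \<in> B \<and> Y0 \<omega>}
                 = (\<integral>\<omega>. indicator B (X0 \<omega>) * p0 (X0 \<omega>) \<partial>M)"
    and indep: "prob_space.indep_vars M (\<lambda>_. Mx \<Otimes>\<^sub>M count_space UNIV)
                  (\<lambda>i \<omega>. (X i \<omega>, Y i \<omega>)) {1..n}"
    and ident: "\<forall>i\<in>{1..n}. distr M (Mx \<Otimes>\<^sub>M count_space UNIV) (\<lambda>\<omega>. (X i \<omega>, Y i \<omega>))
                  = distr M (Mx \<Otimes>\<^sub>M count_space UNIV) (\<lambda>\<omega>. (X0 \<omega>, Y0 \<omega>))"
    and null: "measure M {\<omega>\<in>space M. p0 (X0 \<omega>) - phat (X0 \<omega>) > \<delta>} = 0"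
    and split: "n1 < n"
    and Lam: "finite Lam" "Lam \<noteq> {}"
    and g_meas: "\<And>l. l \<in> Lam \<Longrightarrow> (\<lambda>(D, x). g l D x) \<in> borel_measurable
                   ((\<Pi>\<^sub>M i\<in>{1..n1}. Mx \<Otimes>\<^sub>M count_space UNIV) \<Otimes>\<^sub>M Mx)"
    and g_bdd: "\<And>l D. l \<in> Lam \<Longrightarrow> bounded (range (g l D))"
  shows "measure M {\<omega>\<in>space M.
           let D = restrict (\<lambda>i. (X i \<omega>, Y i \<omega>)) {1..n1};
               G = (\<lambda>l. g l D);
               pd = pdelta phat \<delta>
           in split_stat Lam G pd n1 n (\<lambda>i. X i \<omega>) (\<lambda>i. Y i \<omega>)
                > quantile_pmf (boot_dist Lam G pd n1 n (\<lambda>i. X i \<omega>)) \<alpha>} \<le> \<alpha>"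
proof -
  interpret M: prob_space M by (fact M)
  define Q where "Q = distr M (Mx \<Otimes>\<^sub>M count_space UNIV) (\<lambda>\<omega>. (X0 \<omega>, Y0 \<omega>))"
  note [measurable] = X0Y0 XY phat(1) p0(1)
  have sets_Q: "sets Q = sets (Mx \<Otimes>\<^sub>M count_space UNIV)" by (simp add: Q_def)
  have pd: "pdelta phat \<delta> \<in> borel_measurable Mx" "\<And>x. 0 \<le> pdelta phat \<delta> x \<and> pdelta phat \<delta> x \<le> 1"
    unfolding pdelta_def by auto
  have dominated: "AE x in distr M Mx X0. p0 x \<le> pdelta phat \<delta> x"
    using M null p0(2) by (intro AE_le_pdelta) auto
  have "M.prob {\<omega>\<in>space M. split_rejects Lam g (pdelta phat \<delta>) n1 n \<alpha> (\<lambda>i. (X i \<omega>, Y i \<omega>))}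
      = measure (\<Pi>\<^sub>M i\<in>{1..n}. Q)
          {z \<in> space (\<Pi>\<^sub>M i\<in>{1..n}. Q). split_rejects Lam g (pdelta phat \<delta>) n1 n \<alpha> z}"
    using split indep ident Lam alpha sets_Q pd g_meas unfolding Q_def
    by (intro M.prob_iid_eq_measure_PiM pred_split_rejects split_rejects_restrict) auto
  also have "\<dots> \<le> \<alpha>"
  proof (rule measure_PiM_split_rejects_le[OF _ _ pd dominated])
    show "bernoulli_labels Q (distr M Mx X0) p0"
      unfolding Q_def using M X0Y0 p0 cond by (intro bernoulli_labels_distr) auto
  qed (use split Lam alpha g_meas in auto)
  finally show ?thesis
    by (simp add: split_rejects_def Let_def)
qed

end
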